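(* Let $\Gamma=(N,(S_i)_{i\in N},(u_i)_{i\in N})$ be a finite normal-form game with $N=\{1,\dots,n\}$. Let $\pi=(\pi_1,\dots,\pi_n)$ and $\pi'=(\pi_1',\dots,\pi_n')$ be profiles of tolerance distributions, where for each $i$ both $\pi_i$ and $\pi_i'$ are probability distributions with finite support contained in $[0,\infty)$. Suppose $\pi'$ stochastically dominates $\pi$. Then every $\pi$-tolerant equilibrium of $\Gamma$ is a $\pi'$-tolerant equilibrium of $\Gamma$.
   Context: $S_i$ is the finite set of pure strategies of player $i$, and $S=S_1\times\cdots\times S_n$. Each $u_i:S\to\mathbb{R}$ is extended multilinearly to mixed-strategy profiles. $\Sigma_i$ denotes the set of mixed strategies (probability distributions on $S_i$) of player $i$; for a profile $\sigma=(\sigma_1,\dots,\sigma_n)$, $\sigma_{-i}$ denotes the profile of all components except the $i$-th. A pure strategy $s_i$ is consistent with a tolerance $t\ge 0$ and a profile $\sigma_{-i}$ if $s_i$ is a $t$-best response to $\sigma_{-i}$, i.e., $u_i(s_i',\sigma_{-i})\le u_i(s_i,\sigma_{-i})+t$ for every $s_i'\in S_i$. Given a profile $\pi=(\pi_1,\dots,\pi_n)$, where $\pi_i$ is a distribution on a finite set $T_i\subset[0,\infty)$ of possible tolerances ("types") of player $i$, a mixed-strategy profile $\sigma$ is a $\pi$-tolerant equilibrium if for each player $i$ there is a map $g_i$ from $T_i$ to $\Sigma_i$ such that (E1) for every $t\in T_i$, every pure strategy in the support of $g_i(t)$ is consistent with $t$ and $\sigma_{-i}$; and (E2) $\sum_{t\in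 T_i}\pi_i(t)\,g_i(t)=\sigma_i$ (as mixed strategies). For a distribution $\pi_i$, let $F^{\pi_i}(t)=\sum_{t'\le t}\pi_i(t')$. $\pi_i'$ stochastically dominates $\pi_i$ if $F^{\pi_i'}(t)\le F^{\pi_i}(t)$ for all $t$; $\pi'$ stochastically dominates $\pi$ if $\pi_i'$ stochastically dominates $\pi_i$ for every $i$. *)

theory Defs
  imports "HOL-Probability.Probability"
begin

definition mixed_strats :: "'s set \<Rightarrow> ('s \<Rightarrow> real) set" where
  "mixed_strats A = {x. (\<forall>s. 0 \<le> x s) \<and> (\<forall>s. s \<notin> A \<longrightarrow> x s = 0) \<and> sum x A = 1}"

definition pure_as_mixed :: "'s \<Rightarrow> 's \<Rightarrow> real" where
  "pure_as_mixed s = (\<lambda>s'. if s' = s then 1 else 0)"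

definition exp_util :: "nat \<Rightarrow> (nat \<Rightarrow> 's set) \<Rightarrow> (nat \<Rightarrow> (nat \<Rightarrow> 's) \<Rightarrow> real)
    \<Rightarrow> nat \<Rightarrow> (nat \<Rightarrow> 's \<Rightarrow> real) \<Rightarrow> real" where
  "exp_util n S u i \<sigma> = (\<Sum>p\<in>PiE {1..n} S. (\<Prod>j\<in>{1..n}. \<sigma> j (p j)) * u i p)"

text \<open>s is consistent with tolerance t and sigma_{-i}: s is a t-best response.
  (sigma(i := x) replaces the i-th component, so only sigma_{-i} matters.)\<close>
definition consistent :: "nat \<Rightarrow> (nat \<Rightarrow> 's set) \<Rightarrow> (nat \<Rightarrow> (nat \<Rightarrow> 's) \<Rightarrow> real)
    \<Rightarrow> nat \<Rightarrow> 's \<Rightarrow> real \<Rightarrow> (nat \<Rightarrow> 's \<Rightarrow> real) \<Rightarrow> bool" where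
  "consistent n S u i s t \<sigma> \<longleftrightarrow>
     (\<forall>s'\<in>S i. exp_util n S u i (\<sigma>(i := pure_as_mixed s'))
                \<le> exp_util n S u i (\<sigma>(i := pure_as_mixed s)) + t)"

text \<open>Tolerance distributions pi i are pmfs on reals; the type set T_i is set_pmf (pi i).\<close>
definition tolerant_eq :: "nat \<Rightarrow> (nat \<Rightarrow> 's set) \<Rightarrow> (nat \<Rightarrow> (nat \<Rightarrow> 's) \<Rightarrow> real)
    \<Rightarrow> (nat \<Rightarrow> real pmf) \<Rightarrow> (nat \<Rightarrow> 's \<Rightarrow> real) \<Rightarrow> bool" where
  "tolerant_eq n S u \<pi> \<sigma> \<longleftrightarrow>
     (\<forall>i\<in>{1..n}. \<sigma> i \<in> mixed_strats (S i)) \<and>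
     (\<forall>i\<in>{1..n}. \<exists>g :: real \<Rightarrow> 's \<Rightarrow> real.
        (\<forall>t\<in>set_pmf (\<pi> i). g t \<in> mixed_strats (S i) \<and>
            (\<forall>s\<in>S i. 0 < g t s \<longrightarrow> consistent n S u i s t \<sigma>)) \<and>
        (\<forall>s. (\<Sum>t\<in>set_pmf (\<pi> i). pmf (\<pi> i) t * g t s) = \<sigma> i s))"

definition tol_cdf :: "real pmf \<Rightarrow> real \<Rightarrow> real" where
  "tol_cdf p t = (\<Sum>t'\<in>{t'\<in>set_pmf p. t' \<le> t}. pmf p t')"

definition stoch_dom :: "real pmf \<Rightarrow> real pmf \<Rightarrow> bool" where
  "stoch_dom p' p \<longleftrightarrow> (\<forall>t. tol_cdf p' t \<le> tol_cdf p t)"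

end

theory Submission
  imports Defs
begin

text \<open>Stochastic dominance of the tolerance distributions yields a monotone coupling: a joint
  distribution of old and new tolerances under which the new tolerance is never smaller. It is
  built greedily, always matching as much mass as possible between the largest remaining old
  and new tolerances. A type with new tolerance t' then plays the mixture, weighted by the
  coupling, of the strategies of the old types t \<le> t' coupled with it. Every pure strategy in
  that mixture is a t-best response for some t \<le> t', hence a t'-best response, and averaging
  the new strategies over the types recovers the old average \<sigma> i.\<close>

definition monotone_coupling ::
    "'a::linorder set \<Rightarrow> 'a set \<Rightarrow> ('a \<Rightarrow> real) \<Rightarrow> ('a \<Rightarrow> real) \<Rightarrow> ('a \<Rightarrow> 'a \<Rightarrow> real) \<Rightarrow> bool" where
  "monotone_coupling A B p q \<gamma> \<longleftrightarrow>
     (\<forall>a b. 0 \<le> \<gamma> a b) \<and> (\<forall>a b. 0 < \<gamma> a b \<longrightarrow> a \<le> b) \<and>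
     (\<forall>a\<in>A. sum (\<gamma> a) B = p a) \<and> (\<forall>b\<in>B. (\<Sum>a\<in>A. \<gamma> a b) = q b)"

lemma monotone_coupling_add_point:
  assumes "monotone_coupling A B p q \<gamma>" "finite A" "finite B"
    and "a0 \<in> A" "b0 \<in> B" "a0 \<le> b0" "0 \<le> m"
  shows "monotone_coupling A B (\<lambda>a. p a + (if a = a0 then m else 0))
           (\<lambda>b. q b + (if b = b0 then m else 0))
           (\<lambda>a b. \<gamma> a b + (if a = a0 \<and> b = b0 then m else 0))"
  using assms unfolding monotone_coupling_def
  by (auto simp: sum.distrib split: if_splits)

lemma obtain_top_of_support:
  fixes p :: "'a::linorder \<Rightarrow> real"
  assumes "finite A" "a \<in> A" "p a \<noteq> 0"
  obtains a0 where "a0 \<in> A" "p a0 \<noteq> 0" "\<forall>x\<in>A. a0 < x \<longrightarrow> p x = 0"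
proof
  let ?supp = "{x\<in>A. p x \<noteq> 0}"
  have "finite ?supp" "?supp \<noteq> {}"
    using assms by auto
  then show "Max ?supp \<in> A" "p (Max ?supp) \<noteq> 0"
    using Max_in[of ?supp] by auto
  show "\<forall>x\<in>A. Max ?supp < x \<longrightarrow> p x = 0"
    using Max_ge[OF \<open>finite ?supp\<close>] by (auto simp: not_less[symmetric])
qed

lemma top_support_le_of_tail_dominance:
  fixes p q :: "'a::linorder \<Rightarrow> real"
  assumes "finite A" "\<forall>x. 0 \<le> p x" "a0 \<in> A" "0 < p a0"
    and "\<forall>b\<in>B. b0 < b \<longrightarrow> q b = 0"
    and "\<forall>c. sum p {a\<in>A. c < a} \<le> sum q {b\<in>B. c < b}"
  shows "a0 \<le> b0"
proof (rule ccontr)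
  assume "\<not> a0 \<le> b0"
  then have "p a0 \<le> sum p {a\<in>A. b0 < a}"
    using assms(1-3) by (intro member_le_sum) auto
  moreover have "sum q {b\<in>B. b0 < b} = 0"
    using assms(5) by (intro sum.neutral) auto
  ultimately show False
    using assms(4,6) by (metis leD order_le_less_trans)
qed

lemma obtain_top_atoms:
  fixes p q :: "'a::linorder \<Rightarrow> real"
  assumes "finite A" "finite B" "\<forall>x. 0 \<le> p x" "\<forall>x. 0 \<le> q x" "sum p A = sum q B"
    and "\<forall>c. sum p {a\<in>A. c < a} \<le> sum q {b\<in>B. c < b}" "a \<in> A" "p a \<noteq> 0"
  obtains a0 b0 where "a0 \<in> A" "0 < p a0" "\<forall>a\<in>A. a0 < a \<longrightarrow> p a = 0"
    "b0 \<in> B" "0 < q b0" "\<forall>b\<in>B. b0 < b \<longrightarrow> q b = 0" "a0 \<le> b0"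
proof -
  obtain a0 where a0: "a0 \<in> A" "p a0 \<noteq> 0" and above_a0: "\<forall>a\<in>A. a0 < a \<longrightarrow> p a = 0"
    by (rule obtain_top_of_support[of A a p, OF assms(1,7,8)])
  have "0 < p a0"
    using a0(2) assms(3) by (simp add: order.strict_iff_order)
  moreover have "p a0 \<le> sum p A"
    using a0(1) assms(1,3) by (intro member_le_sum) auto
  ultimately have "sum q B \<noteq> 0"
    using assms(5) by linarith
  then obtain b where "b \<in> B" "q b \<noteq> 0"
    using sum.neutral[of B q] by blast
  then obtain b0 where b0: "b0 \<in> B" "q b0 \<noteq> 0" and above_b0: "\<forall>b\<in>B. b0 < b \<longrightarrow> q b = 0"
    by (rule obtain_top_of_support[OF assms(2)])
  have "0 < q b0"
    using b0(2) assms(4) by (simp add: order.strict_iff_order)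
  moreover have "a0 \<le> b0"
    by (rule top_support_le_of_tail_dominance[OF assms(1,3) a0(1) \<open>0 < p a0\<close> above_b0 assms(6)])
  ultimately show ?thesis
    using that[OF a0(1) \<open>0 < p a0\<close> above_a0 b0(1)] above_b0 by blast
qed

lemma tail_dominance_remove_top:
  fixes p q :: "'a::linorder \<Rightarrow> real"
  assumes "finite A" "finite B" "a0 \<in> A" "b0 \<in> B" "a0 \<le> b0"
    and "\<forall>a\<in>A. a0 < a \<longrightarrow> p a = 0" "\<forall>x. 0 \<le> q x" "m \<le> q b0"
    and "\<forall>c. sum p {a\<in>A. c < a} \<le> sum q {b\<in>B. c < b}"
  shows "sum (\<lambda>a. p a - (if a = a0 then m else 0)) {a\<in>A. c < a}
           \<le> sum (\<lambda>b. q b - (if b = b0 then m else 0)) {b\<in>B. c < b}"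
proof (cases "c < a0")
  case True
  then show ?thesis
    using assms by (simp add: sum_subtractf)
next
  case False
  then have "sum (\<lambda>a. p a - (if a = a0 then m else 0)) {a\<in>A. c < a} = 0"
    using assms(6) by (intro sum.neutral) auto
  moreover have "0 \<le> sum (\<lambda>b. q b - (if b = b0 then m else 0)) {b\<in>B. c < b}"
    using assms(7,8) by (intro sum_nonneg) auto
  ultimately show ?thesis
    by simp
qed

lemma card_add_less_of_subset:
  assumes "finite X" "finite Y" "X' \<subseteq> X" "Y' \<subseteq> Y" "X' \<subset> X \<or> Y' \<subset> Y"
  shows "card X' + card Y' < card X + card Y"
  using assms psubset_card_mono[of X X'] psubset_card_mono[of Y Y']
    card_mono[of X X'] card_mono[of Y Y']
  by (auto intro: add_less_le_mono add_le_less_mono)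

lemma monotone_coupling_exists:
  fixes p q :: "'a::linorder \<Rightarrow> real"
  assumes "finite A" "finite B" "\<forall>x. 0 \<le> p x" "\<forall>x. 0 \<le> q x" "sum p A = sum q B"
    and "\<forall>c. sum p {a\<in>A. c < a} \<le> sum q {b\<in>B. c < b}"
  shows "\<exists>\<gamma>. monotone_coupling A B p q \<gamma>"
  using assms(3-)
proof (induction "card {a\<in>A. p a \<noteq> 0} + card {b\<in>B. q b \<noteq> 0}" arbitrary: p q rule: less_induct)
  case less
  note p_nonneg = less.prems(1) and q_nonneg = less.prems(2)
    and mass = less.prems(3) and dom = less.prems(4)
  show ?case
  proof (cases "\<forall>a\<in>A. p a = 0")
    case True
    then have "\<forall>b\<in>B. q b = 0"
      using mass q_nonneg assms(2) by (simp add: sum_nonneg_eq_0_iff)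
    with True have "monotone_coupling A B p q (\<lambda>_ _. 0)"
      unfolding monotone_coupling_def by simp
    then show ?thesis
      by blast
  next
    case False
    then obtain a where "a \<in> A" "p a \<noteq> 0"
      by blast
    then obtain a0 b0 where a0: "a0 \<in> A" "0 < p a0" and above_a0: "\<forall>a\<in>A. a0 < a \<longrightarrow> p a = 0"
      and b0: "b0 \<in> B" "0 < q b0" and "a0 \<le> b0"
      by (rule obtain_top_atoms[OF assms(1,2) p_nonneg q_nonneg mass dom])
    define m where "m = min (p a0) (q b0)"
    define p' where "p' = (\<lambda>a. p a - (if a = a0 then m else 0))"
    define q' where "q' = (\<lambda>b. q b - (if b = b0 then m else 0))"
    have "0 \<le> m"
      using a0 b0 unfolding m_def by simp
    have nonneg': "\<forall>x. 0 \<le> p' x" "\<forall>x. 0 \<le> q' x"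
      using p_nonneg q_nonneg unfolding p'_def q'_def m_def by auto
    have mass': "sum p' A = sum q' B"
      using mass a0 b0 assms unfolding p'_def q'_def by (simp add: sum_subtractf)
    have dom': "\<forall>c. sum p' {a\<in>A. c < a} \<le> sum q' {b\<in>B. c < b}"
      unfolding p'_def q'_def
      using tail_dominance_remove_top[OF assms(1,2) a0(1) b0(1) \<open>a0 \<le> b0\<close> above_a0 q_nonneg _ dom]
      by (simp add: m_def)
    \<comment> \<open>at least one of the two top atoms is used up, so the induction measure drops\<close>
    have "card {a\<in>A. p' a \<noteq> 0} + card {b\<in>B. q' b \<noteq> 0}
            < card {a\<in>A. p a \<noteq> 0} + card {b\<in>B. q b \<noteq> 0}"
    proof (rule card_add_less_of_subset)
      show sub: "{a\<in>A. p' a \<noteq> 0} \<subseteq> {a\<in>A. p a \<noteq> 0}" "{b\<in>B. q' b \<noteq> 0} \<subseteq> {b\<in>B. q b \<noteq> 0}"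
        using a0 b0 unfolding p'_def q'_def by auto
      have "p' a0 = 0 \<or> q' b0 = 0"
        unfolding p'_def q'_def m_def by (simp add: min_def)
      then show "{a\<in>A. p' a \<noteq> 0} \<subset> {a\<in>A. p a \<noteq> 0} \<or> {b\<in>B. q' b \<noteq> 0} \<subset> {b\<in>B. q b \<noteq> 0}"
        using a0 b0 sub by auto
    qed (use assms(1,2) in auto)
    then obtain \<gamma> where "monotone_coupling A B p' q' \<gamma>"
      using less.hyps nonneg' mass' dom' by blast
    from monotone_coupling_add_point[OF this assms(1,2) a0(1) b0(1) \<open>a0 \<le> b0\<close> \<open>0 \<le> m\<close>]
    show ?thesis
      unfolding p'_def q'_def by auto
  qed
qed

lemma sum_pmf_upper_tail:
  assumes "finite (set_pmf p)"
  shows "sum (pmf p) {a\<in>set_pmf p. c < a} = 1 - tol_cdf p c"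
proof -
  have split: "set_pmf p = {a\<in>set_pmf p. a \<le> c} \<union> {a\<in>set_pmf p. c < a}"
    by auto
  have "1 = sum (pmf p) (set_pmf p)"
    using sum_pmf_eq_1[OF assms] by simp
  also have "\<dots> = sum (pmf p) {a\<in>set_pmf p. a \<le> c} + sum (pmf p) {a\<in>set_pmf p. c < a}"
    by (subst split, rule sum.union_disjoint) (use assms in auto)
  finally show ?thesis
    unfolding tol_cdf_def by simp
qed

lemma stoch_dom_monotone_coupling:
  assumes "finite (set_pmf p)" "finite (set_pmf p')" "stoch_dom p' p"
  shows "\<exists>\<gamma>. monotone_coupling (set_pmf p) (set_pmf p') (pmf p) (pmf p') \<gamma>"
  using assms
  by (intro monotone_coupling_exists)
    (auto simp: sum_pmf_eq_1 sum_pmf_upper_tail stoch_dom_def)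

lemma consistent_mono_tolerance:
  assumes "consistent n S u i s t \<sigma>" "t \<le> t'"
  shows "consistent n S u i s t' \<sigma>"
  using assms unfolding consistent_def by force

definition coupled_mixture ::
    "'a set \<Rightarrow> ('a \<Rightarrow> real) \<Rightarrow> ('a \<Rightarrow> 'a \<Rightarrow> real) \<Rightarrow> ('a \<Rightarrow> 's \<Rightarrow> real) \<Rightarrow> 'a \<Rightarrow> 's \<Rightarrow> real" where
  "coupled_mixture A q \<gamma> g b s = (\<Sum>a\<in>A. \<gamma> a b * g a s) / q b"

lemma coupled_mixture_mixed_strats:
  assumes "monotone_coupling A B p q \<gamma>" "b \<in> B" "0 < q b"
    and "\<forall>a\<in>A. g a \<in> mixed_strats X"
  shows "coupled_mixture A q \<gamma> g b \<in> mixed_strats X"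
proof -
  have "sum (coupled_mixture A q \<gamma> g b) X = (\<Sum>a\<in>A. \<gamma> a b * sum (g a) X) / q b"
    unfolding coupled_mixture_def
    by (simp add: sum_divide_distrib[symmetric] sum_distrib_left sum.swap[of _ A])
  also have "\<dots> = 1"
    using assms unfolding monotone_coupling_def mixed_strats_def by simp
  finally show ?thesis
    using assms unfolding monotone_coupling_def mixed_strats_def coupled_mixture_def
    by (auto intro!: divide_nonneg_pos sum_nonneg)
qed

lemma coupled_mixture_support:
  assumes "monotone_coupling A B p q \<gamma>" "\<forall>a\<in>A. g a \<in> mixed_strats X"
    and "0 < coupled_mixture A q \<gamma> g b s" "0 < q b"
  obtains a where "a \<in> A" "a \<le> b" "0 < g a s"
proof -
  have "0 < (\<Sum>a\<in>A. \<gamma> a b * g a s)"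
    using assms(3,4) unfolding coupled_mixture_def by (simp add: zero_less_divide_iff)
  then obtain a where a: "a \<in> A" and pos: "0 < \<gamma> a b * g a s"
    using sum_nonpos[of A "\<lambda>a. \<gamma> a b * g a s"] by (meson not_less)
  have "0 \<le> \<gamma> a b" "0 \<le> g a s"
    using assms(1,2) a unfolding monotone_coupling_def mixed_strats_def by auto
  with pos have "0 < \<gamma> a b" "0 < g a s"
    by (simp_all add: zero_less_mult_iff)
  then show ?thesis
    using that a assms(1) unfolding monotone_coupling_def by blast
qed

lemma coupled_mixture_average:
  assumes "monotone_coupling A B p q \<gamma>" "\<forall>b\<in>B. 0 < q b"
  shows "(\<Sum>b\<in>B. q b * coupled_mixture A q \<gamma> g b s) = (\<Sum>a\<in>A. p a * g a s)"
proof -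
  have "(\<Sum>b\<in>B. q b * coupled_mixture A q \<gamma> g b s) = (\<Sum>b\<in>B. \<Sum>a\<in>A. \<gamma> a b * g a s)"
    using assms(2) unfolding coupled_mixture_def by (intro sum.cong) auto
  also have "\<dots> = (\<Sum>a\<in>A. sum (\<gamma> a) B * g a s)"
    by (simp add: sum.swap[of _ B] sum_distrib_right)
  finally show ?thesis
    using assms(1) unfolding monotone_coupling_def by simp
qed

lemma tolerant_type_map_stoch_dom:
  assumes "finite (set_pmf p)" "finite (set_pmf p')" "stoch_dom p' p"
    and "\<forall>t\<in>set_pmf p. g t \<in> mixed_strats (S i) \<and>
           (\<forall>s\<in>S i. 0 < g t s \<longrightarrow> consistent n S u i s t \<sigma>)"
    and "\<forall>s. (\<Sum>t\<in>set_pmf p. pmf p t * g t s) = \<sigma> i s"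
  shows "\<exists>g'. (\<forall>t\<in>set_pmf p'. g' t \<in> mixed_strats (S i) \<and>
           (\<forall>s\<in>S i. 0 < g' t s \<longrightarrow> consistent n S u i s t \<sigma>)) \<and>
         (\<forall>s. (\<Sum>t\<in>set_pmf p'. pmf p' t * g' t s) = \<sigma> i s)"
proof -
  obtain \<gamma> where \<gamma>: "monotone_coupling (set_pmf p) (set_pmf p') (pmf p) (pmf p') \<gamma>"
    using stoch_dom_monotone_coupling[OF assms(1-3)] ..
  define g' where "g' = coupled_mixture (set_pmf p) (pmf p') \<gamma> g"
  have g_mixed: "\<forall>t\<in>set_pmf p. g t \<in> mixed_strats (S i)"
    using assms(4) by blast
  have "consistent n S u i s t' \<sigma>"
    if t': "t' \<in> set_pmf p'" and s: "s \<in> S i" and pos: "0 < g' t' s" for t' s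
  proof -
    obtain t where "t \<in> set_pmf p" and "t \<le> t'" and "0 < g t s"
      using coupled_mixture_support[OF \<gamma> g_mixed _ pmf_positive[OF t']] pos
      unfolding g'_def by blast
    then have "consistent n S u i s t \<sigma>"
      using assms(4) s by blast
    then show ?thesis
      using \<open>t \<le> t'\<close> by (rule consistent_mono_tolerance)
  qed
  moreover have "\<forall>t\<in>set_pmf p'. g' t \<in> mixed_strats (S i)"
    using coupled_mixture_mixed_strats[OF \<gamma> _ pmf_positive g_mixed] unfolding g'_def by blast
  moreover have "\<forall>s. (\<Sum>t\<in>set_pmf p'. pmf p' t * g' t s) = \<sigma> i s"
    using coupled_mixture_average[OF \<gamma>, of g] assms(5) unfolding g'_def by (simp add: pmf_positive)
  ultimately show ?thesis
    by (intro exI[of _ g']) blast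
qed

theorem theorem2p3:
  fixes n :: nat and S :: "nat \<Rightarrow> 's set" and u :: "nat \<Rightarrow> (nat \<Rightarrow> 's) \<Rightarrow> real"
    and \<pi> \<pi>' :: "nat \<Rightarrow> real pmf" and \<sigma> :: "nat \<Rightarrow> 's \<Rightarrow> real"
  assumes "n \<ge> 1"
    and "\<forall>i\<in>{1..n}. finite (S i) \<and> S i \<noteq> {}"
    and "\<forall>i\<in>{1..n}. finite (set_pmf (\<pi> i)) \<and> set_pmf (\<pi> i) \<subseteq> {0..}"
    and "\<forall>i\<in>{1..n}. finite (set_pmf (\<pi>' i)) \<and> set_pmf (\<pi>' i) \<subseteq> {0..}"
    and "\<forall>i\<in>{1..n}. stoch_dom (\<pi>' i) (\<pi> i)"
    and "tolerant_eq n S u \<pi> \<sigma>"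
  shows "tolerant_eq n S u \<pi>' \<sigma>"
  unfolding tolerant_eq_def
proof (intro conjI ballI)
  fix i assume "i \<in> {1..n}"
  then show "\<sigma> i \<in> mixed_strats (S i)"
    using assms(6) unfolding tolerant_eq_def by blast
  obtain g where "\<forall>t\<in>set_pmf (\<pi> i). g t \<in> mixed_strats (S i) \<and>
           (\<forall>s\<in>S i. 0 < g t s \<longrightarrow> consistent n S u i s t \<sigma>)"
      and "\<forall>s. (\<Sum>t\<in>set_pmf (\<pi> i). pmf (\<pi> i) t * g t s) = \<sigma> i s"
    using assms(6) \<open>i \<in> {1..n}\<close> unfolding tolerant_eq_def by blast
  then show "\<exists>g. (\<forall>t\<in>set_pmf (\<pi>' i). g t \<in> mixed_strats (S i) \<and>
           (\<forall>s\<in>S i. 0 < g t s \<longrightarrow> consistent n S u i s t \<sigma>)) \<and>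
         (\<forall>s. (\<Sum>t\<in>set_pmf (\<pi>' i). pmf (\<pi>' i) t * g t s) = \<sigma> i s)"
    using tolerant_type_map_stoch_dom assms(3-5) \<open>i \<in> {1..n}\<close> by blast
qed

end
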